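(* Let $n \ge 2$, let $\Omega \subset \mathbb{R}^n$ be an unbounded domain, let $f : \Omega \times [0,\infty) \to \mathbb{R}$, and let $u$ be a non-negative (viscosity) solution of the problem $\Delta_\infty u \ge f(x,u)$ in $\Omega$, $u|_{\partial\Omega} = 0$. Let $R > 0$, let $B_R$ be the open ball of radius $R$ centered at the origin, and let $\mathcal{F} : (B_R \cap \Omega) \times [0,\infty) \to \mathbb{R}$ be a function that is non-decreasing in its last argument and satisfies $\mathcal{F}(x,t) < f(x,t)$ for all $x \in B_R \cap \Omega$ and $t > 0$. Let $U \in C^2(B_R \cap \Omega) \cap C(\overline{B_R \cap \Omega})$ be non-negative on $B_R \cap \Omega$, satisfy classically $\Delta_\infty U \le \mathcal{F}(x,U)$ in $B_R \cap \Omega$, and satisfy $U \ge u$ on $\partial(B_R \cap \Omega)$. Then $U \ge u$ on $\overline{B_R \cap \Omega}$.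
   Context: The $\infty$-Laplacian is $\Delta_\infty u = \sum_{i,j=1}^n \frac{\partial^2 u}{\partial x_i \partial x_j}\frac{\partial u}{\partial x_i}\frac{\partial u}{\partial x_j}$. For $u:\Omega \to \mathbb{R}$ and $x \in \Omega$, the second-order superjet $J^{2,+}_\Omega u(x)$ is the set of pairs $(v,A)$ with $v \in \mathbb{R}^n$ and $A$ a symmetric $n\times n$ matrix such that $u(y) - u(x) \le \langle v, y-x\rangle + \frac12 \langle A(y-x), y-x\rangle + o(|y-x|^2)$ for all $y$ in some neighborhood of $x$. A function $u \ge 0$ on $\overline{\Omega}$ is a non-negative solution of the problem if $u$ is upper semicontinuous on $\overline{\Omega}$ (i.e. $\limsup_{y\to x} u(y) \le u(x)$ for every $x\in\overline\Omega$), $u = 0$ on $\partial\Omega$, and for every $x \in \Omega$ with $J^{2,+}_\Omega u(x) \ne \emptyset$ one has $\langle Av, v\rangle \ge f(x,u(x))$ for all $(v,A) \in J^{2,+}_\Omega u(x)$. If $\Omega = \mathbb{R}^n$, the boundary condition is void. *)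

theory Defs
  imports "HOL-Analysis.Analysis"
begin

definition superjet2 ::
  "(real^('n::finite)) set \<Rightarrow> (real^'n \<Rightarrow> real) \<Rightarrow> real^'n \<Rightarrow> ((real^'n) \<times> (real^'n^'n)) set" where
  "superjet2 \<Omega> u x =
     {(v, A). transpose A = A \<and>
        (\<forall>\<epsilon>>0. \<forall>\<^sub>F y in at x within \<Omega>.
            u y - u x \<le> v \<bullet> (y - x) + (1/2) * ((A *v (y - x)) \<bullet> (y - x)) + \<epsilon> * (norm (y - x))\<^sup>2)}"

definition usc_on :: "'a::topological_space set \<Rightarrow> ('a \<Rightarrow> real) \<Rightarrow> bool" where
  "usc_on S u \<longleftrightarrow> (\<forall>x\<in>S. \<forall>\<epsilon>>0. \<forall>\<^sub>F y in at x within S. u y < u x + \<epsilon>)"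

definition nonneg_solution ::
  "(real^'n::finite) set \<Rightarrow> (real^'n \<Rightarrow> real \<Rightarrow> real) \<Rightarrow> (real^'n \<Rightarrow> real) \<Rightarrow> bool" where
  "nonneg_solution \<Omega> f u \<longleftrightarrow>
     (\<forall>x\<in>closure \<Omega>. u x \<ge> 0) \<and>
     usc_on (closure \<Omega>) u \<and>
     (\<forall>x\<in>frontier \<Omega>. u x = 0) \<and>
     (\<forall>x\<in>\<Omega>. \<forall>v A. (v, A) \<in> superjet2 \<Omega> u x \<longrightarrow> (A *v v) \<bullet> v \<ge> f x (u x))"

definition C2_on :: "(real^'n::finite \<Rightarrow> real) \<Rightarrow> (real^'n) set \<Rightarrow> bool" where
  "C2_on U S \<longleftrightarrow>
     (\<exists>g H. (\<forall>x\<in>S. (U has_derivative (\<lambda>h. g x \<bullet> h)) (at x) \<and>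
                    (g has_derivative (\<lambda>h. H x *v h)) (at x)) \<and>
            continuous_on S H)"

definition grad :: "(real^'n::finite \<Rightarrow> real) \<Rightarrow> real^'n \<Rightarrow> real^'n" where
  "grad U x = (THE v. (U has_derivative (\<lambda>h. v \<bullet> h)) (at x))"

definition hess :: "(real^'n::finite \<Rightarrow> real) \<Rightarrow> real^'n \<Rightarrow> real^'n^'n" where
  "hess U x = (THE A. (grad U has_derivative (\<lambda>h. A *v h)) (at x))"

definition inf_laplacian :: "(real^'n::finite \<Rightarrow> real) \<Rightarrow> real^'n \<Rightarrow> real" where
  "inf_laplacian U x = (\<Sum>i\<in>UNIV. \<Sum>j\<in>UNIV. hess U x $ i $ j * grad U x $ i * grad U x $ j)"

end

theory Submission
  imports Defs
begin

text \<open>If u - U were positive somewhere on the closure of D = B_R \<inter> \<Omega>, then, being upper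
  semicontinuous on a compact set, it would attain a positive maximum at some x0, and x0 cannot lie
  on the boundary, where U \<ge> u. Thus U touches u + const from above at the interior point x0, and
  the second-order Taylor expansion of U puts (grad U x0, hess U x0) into the superjet of u at x0.
  The subsolution property then yields the contradiction
  f(x0, u x0) \<le> \<Delta>\<infinity> U(x0) \<le> F(x0, U x0) \<le> F(x0, u x0) < f(x0, u x0).\<close>

lemma usc_on_subset: "usc_on S u \<Longrightarrow> T \<subseteq> S \<Longrightarrow> usc_on T u"
  unfolding usc_on_def by (meson at_le filter_leD subsetD)

lemma usc_on_diff_continuous:
  assumes "usc_on S u" "continuous_on S U"
  shows "usc_on S (\<lambda>x. u x - U x)"
  unfolding usc_on_def
proof (intro ballI allI impI)
  fix x and e :: real
  assume x: "x \<in> S" and e: "e > 0"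
  have "\<forall>\<^sub>F y in at x within S. u y < u x + e/2"
    using assms(1) x e unfolding usc_on_def by simp
  moreover have "\<forall>\<^sub>F y in at x within S. U x - e/2 < U y"
    using assms(2) x e unfolding continuous_on_def by (intro order_tendstoD(1)) auto
  ultimately show "\<forall>\<^sub>F y in at x within S. u y - U y < u x - U x + e"
    by eventually_elim simp
qed

text \<open>Otherwise every point has a strictly better one, and by upper semicontinuity it stays better
  on a neighbourhood; the best of the finitely many such points attached to a finite subcover would
  then beat itself.\<close>

lemma usc_on_attains_max:
  assumes "compact K" "K \<noteq> {}" "usc_on K h"
  shows "\<exists>x\<in>K. \<forall>y\<in>K. h y \<le> h x"
proof (rule ccontr)
  assume "\<not> ?thesis"
  then have "\<forall>x\<in>K. \<exists>y\<in>K. h x < h y"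
    by (auto simp: not_le)
  then obtain better where better: "\<forall>x\<in>K. better x \<in> K \<and> h x < h (better x)"
    by metis
  have "\<exists>T. open T \<and> x \<in> T \<and> (\<forall>z\<in>T \<inter> K. h z < h (better x))" if x: "x \<in> K" for x
  proof -
    have "h (better x) - h x > 0"
      using better x by simp
    then have "\<forall>\<^sub>F z in at x within K. h z < h x + (h (better x) - h x)"
      by (rule assms(3)[unfolded usc_on_def, rule_format, OF x])
    then obtain T where "open T" "x \<in> T" "\<forall>z\<in>T. z \<noteq> x \<longrightarrow> z \<in> K \<longrightarrow> h z < h (better x)"
      unfolding eventually_at_topological by auto
    then show ?thesis
      using better x by (intro exI[of _ T]) auto
  qed
  then obtain T where T: "\<forall>x\<in>K. open (T x) \<and> x \<in> T x \<and> (\<forall>z\<in>T x \<inter> K. h z < h (better x))"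
    by metis
  then have "K \<subseteq> (\<Union>x\<in>K. T x)"
    by blast
  then obtain C where C: "C \<subseteq> K" "finite C" "K \<subseteq> \<Union>(T ` C)"
    using compactE_image[OF assms(1)] T by metis
  have "Max ((h \<circ> better) ` C) \<in> (h \<circ> better) ` C"
    using C assms(2) by (intro Max_in) auto
  then obtain c where c: "c \<in> C" "h (better c) = Max ((h \<circ> better) ` C)"
    by auto
  have c_max: "h (better c') \<le> h (better c)" if "c' \<in> C" for c'
    unfolding c(2) using C(2) that by (intro Max_ge) auto
  obtain c' where c': "c' \<in> C" "better c \<in> T c'"
    using C c better by blast
  then have "h (better c) < h (better c')"
    using T C c better by blast
  with c_max c' show False
    by fastforce
qed

lemma second_order_taylor_upper_bound:
  fixes U :: "'a::real_inner \<Rightarrow> real"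
  assumes S: "open S" "x \<in> S"
    and dU: "\<forall>y\<in>S. (U has_derivative (\<lambda>h. g y \<bullet> h)) (at y)"
    and dg: "(g has_derivative H) (at x)"
    and e: "e > 0"
  shows "\<forall>\<^sub>F y in at x. U y - U x \<le> g x \<bullet> (y - x) + 1/2 * (H (y - x) \<bullet> (y - x)) + e * (norm (y - x))\<^sup>2"
proof -
  interpret H: bounded_linear H
    using dg by (rule has_derivative_bounded_linear)
  obtain d1 where d1: "d1 > 0" "\<forall>y. norm (y - x) < d1 \<longrightarrow> norm (g y - g x - H (y - x)) \<le> e * norm (y - x)"
    using dg e unfolding has_derivative_within_alt by blast
  obtain d2 where d2: "d2 > 0" "ball x d2 \<subseteq> S"
    using S openE by blast
  show ?thesis
    unfolding eventually_at
  proof (intro exI[of _ "min d1 d2"] conjI ballI impI)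
    fix y assume "y \<noteq> x \<and> dist y x < min d1 d2"
    then have yd: "norm (y - x) < min d1 d2"
      by (simp add: dist_norm)
    define h where "h = y - x"
    define \<phi> where "\<phi> t = U (x + t *\<^sub>R h) - t * (g x \<bullet> h) - t\<^sup>2/2 * (H h \<bullet> h)" for t
    define \<phi>' where "\<phi>' t = g (x + t *\<^sub>R h) \<bullet> h - g x \<bullet> h - t * (H h \<bullet> h)" for t
    have near: "norm ((x + t *\<^sub>R h) - x) < min d1 d2" if "0 \<le> t" "t \<le> 1" for t
      using yd that mult_left_le_one_le[of "norm h" t] by (simp add: h_def)
    have "(\<phi> has_real_derivative \<phi>' t) (at t)" if "0 \<le> t" "t \<le> 1" for t
    proof -
      have "x + t *\<^sub>R h \<in> S"
        using near[OF that] d2 by (auto simp: dist_norm norm_minus_commute)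
      moreover have "((\<lambda>s. x + s *\<^sub>R h) has_derivative (\<lambda>s. s *\<^sub>R h)) (at t)"
        by (auto intro!: derivative_eq_intros)
      ultimately have "((\<lambda>s. U (x + s *\<^sub>R h)) has_derivative (\<lambda>s. g (x + t *\<^sub>R h) \<bullet> (s *\<^sub>R h))) (at t)"
        using dU has_derivative_compose by blast
      moreover have "(\<lambda>s. g (x + t *\<^sub>R h) \<bullet> (s *\<^sub>R h)) = (*) (g (x + t *\<^sub>R h) \<bullet> h)"
        by (simp add: fun_eq_iff mult.commute)
      ultimately have "((\<lambda>s. U (x + s *\<^sub>R h)) has_real_derivative (g (x + t *\<^sub>R h) \<bullet> h)) (at t)"
        unfolding has_field_derivative_def by simp
      then show ?thesis
        unfolding \<phi>_def[abs_def] \<phi>'_def by (auto intro!: derivative_eq_intros)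
    qed
    \<comment> \<open>\<phi> 1 - \<phi> 0 is the second-order Taylor remainder; by the mean value theorem it equals \<phi>' z,
      which the differentiability of g at x bounds by e |h|^2.\<close>
    then obtain z where z: "0 < z" "z < 1" "\<phi> 1 - \<phi> 0 = \<phi>' z"
      using MVT2[of 0 1 \<phi> \<phi>'] by auto
    have "\<phi>' z = (g (x + z *\<^sub>R h) - g x - H ((x + z *\<^sub>R h) - x)) \<bullet> h"
      unfolding \<phi>'_def by (simp add: H.scaleR inner_diff_left)
    also have "\<dots> \<le> (e * norm (z *\<^sub>R h)) * norm h"
      using d1(2)[rule_format, of "x + z *\<^sub>R h"] near[of z] z
      by (intro order_trans[OF norm_cauchy_schwarz] mult_right_mono) auto
    also have "\<dots> \<le> e * (norm h)\<^sup>2"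
      using z e by (simp add: power2_eq_square mult_left_le_one_le)
    finally show "U y - U x \<le> g x \<bullet> (y - x) + 1/2 * (H (y - x) \<bullet> (y - x)) + e * (norm (y - x))\<^sup>2"
      using z unfolding \<phi>_def h_def by simp
  qed (use d1 d2 in simp)
qed

text \<open>Superjets admit only symmetric matrices, whereas C2_on does not force the Hessian to be
  symmetric; symmetrising leaves the quadratic form unchanged.\<close>

definition sym_part :: "real^'n^'n \<Rightarrow> real^'n^'n" where
  "sym_part M = (1/2) *\<^sub>R (M + transpose M)"

lemma transpose_sym_part: "transpose (sym_part M) = sym_part M"
  unfolding sym_part_def by (simp add: transpose_def vec_eq_iff)

lemma sym_part_quadratic_form: "(sym_part M *v h) \<bullet> h = (M *v h) \<bullet> h"
proof -
  have "(transpose M *v h) \<bullet> h = (M *v h) \<bullet> h"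
    by (metis dot_lmul_matrix inner_commute transpose_matrix_vector)
  then show ?thesis
    unfolding sym_part_def
    by (simp add: scaleR_matrix_vector_assoc[symmetric] matrix_vector_mult_add_rdistrib inner_add_left
        del: transpose_matrix_vector)
qed

lemma grad_eqI:
  assumes "(U has_derivative (\<lambda>h. v \<bullet> h)) (at x)"
  shows "grad U x = v"
  unfolding grad_def
proof (rule the_equality)
  fix w assume "(U has_derivative (\<lambda>h. w \<bullet> h)) (at x)"
  then have "(\<lambda>h. w \<bullet> h) = (\<lambda>h. v \<bullet> h)"
    using has_derivative_unique assms by blast
  then have "(w - v) \<bullet> (w - v) = 0"
    by (metis inner_diff_left right_minus_eq)
  then show "w = v" by simp
qed (rule assms)

lemma hess_eqI:
  assumes "(grad U has_derivative (\<lambda>h. A *v h)) (at x)"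
  shows "hess U x = A"
  unfolding hess_def
proof (rule the_equality)
  fix B assume "(grad U has_derivative (\<lambda>h. B *v h)) (at x)"
  then show "B = A"
    using has_derivative_unique assms by (metis matrix_eq)
qed (rule assms)

lemma inf_laplacian_eq_quadratic_form:
  "inf_laplacian U x = (hess U x *v grad U x) \<bullet> grad U x"
  unfolding inf_laplacian_def
  by (simp add: matrix_vector_mult_def inner_vec_def sum_distrib_left algebra_simps)

lemma grad_hess_in_superjet2_at_touching_point:
  assumes D: "open D" "x \<in> D"
    and C2: "C2_on U D"
    and touch: "\<forall>y\<in>D. u y - U y \<le> u x - U x"
  shows "(grad U x, sym_part (hess U x)) \<in> superjet2 \<Omega> u x"
proof -
  obtain g H where gH: "\<forall>y\<in>D. (U has_derivative (\<lambda>h. g y \<bullet> h)) (at y) \<and>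
                                (g has_derivative (\<lambda>h. H y *v h)) (at y)"
    using C2 unfolding C2_on_def by blast
  have grad: "grad U y = g y" if "y \<in> D" for y
    using gH that by (blast intro: grad_eqI)
  have "(grad U has_derivative (\<lambda>h. H x *v h)) (at x)"
    using gH D by (auto intro: has_derivative_transform_within_open[OF _ D] simp: grad)
  then have hess: "hess U x = H x"
    by (rule hess_eqI)
  have "(g x, sym_part (H x)) \<in> superjet2 \<Omega> u x"
    unfolding superjet2_def
  proof (simp only: mem_Collect_eq case_prod_conv sym_part_quadratic_form, intro conjI transpose_sym_part allI impI)
    fix e :: real assume "e > 0"
    then have "\<forall>\<^sub>F y in at x. U y - U x \<le> g x \<bullet> (y - x) + 1/2 * ((H x *v (y - x)) \<bullet> (y - x)) + e * (norm (y - x))\<^sup>2"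
      using gH D by (intro second_order_taylor_upper_bound[where S = D]) auto
    moreover have "\<forall>\<^sub>F y in at x. y \<in> D"
      using eventually_at_in_open'[OF D] .
    ultimately have "\<forall>\<^sub>F y in at x. u y - u x \<le> g x \<bullet> (y - x) + 1/2 * ((H x *v (y - x)) \<bullet> (y - x)) + e * (norm (y - x))\<^sup>2"
      by eventually_elim (use touch in fastforce)
    then show "\<forall>\<^sub>F y in at x within \<Omega>. u y - u x \<le> g x \<bullet> (y - x) + 1/2 * ((H x *v (y - x)) \<bullet> (y - x)) + e * (norm (y - x))\<^sup>2"
      using filter_leD[OF at_le[of \<Omega> UNIV]] by blast
  qed
  then show ?thesis
    using D by (simp add: grad hess)
qed

lemma comparison_with_classical_supersolution:
  assumes D: "open D" "bounded D" "D \<subseteq> \<Omega>"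
    and sol: "nonneg_solution \<Omega> f u"
    and F_mono: "\<forall>x\<in>D. \<forall>s t. 0 \<le> s \<longrightarrow> s \<le> t \<longrightarrow> F x s \<le> F x t"
    and F_less: "\<forall>x\<in>D. \<forall>t>0. F x t < f x t"
    and U_C2: "C2_on U D"
    and U_cont: "continuous_on (closure D) U"
    and U_nonneg: "\<forall>x\<in>D. U x \<ge> 0"
    and U_super: "\<forall>x\<in>D. inf_laplacian U x \<le> F x (U x)"
    and U_bdry: "\<forall>x\<in>frontier D. U x \<ge> u x"
  shows "\<forall>x\<in>closure D. U x \<ge> u x"
proof (rule ccontr)
  assume "\<not> ?thesis"
  then obtain x1 where x1: "x1 \<in> closure D" "U x1 < u x1"
    by (auto simp: not_le)
  have "usc_on (closure D) u"
    using usc_on_subset[OF _ closure_mono[OF D(3)]] sol unfolding nonneg_solution_def by blast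
  then have "usc_on (closure D) (\<lambda>x. u x - U x)"
    using U_cont by (rule usc_on_diff_continuous)
  moreover have "compact (closure D)" "closure D \<noteq> {}"
    using D(2) x1(1) by (auto simp: compact_closure)
  ultimately obtain x0 where x0: "x0 \<in> closure D" "\<forall>y\<in>closure D. u y - U y \<le> u x0 - U x0"
    using usc_on_attains_max by blast
  with x1 have pos: "U x0 < u x0"
    by fastforce
  have "x0 \<in> D"
  proof (rule ccontr)
    assume "x0 \<notin> D"
    then have "x0 \<in> frontier D"
      using x0(1) D(1) by (simp add: frontier_def interior_open)
    with U_bdry pos show False
      by fastforce
  qed
  have "(grad U x0, sym_part (hess U x0)) \<in> superjet2 \<Omega> u x0"
    using x0(2) closure_subset by (intro grad_hess_in_superjet2_at_touching_point[OF D(1) \<open>x0 \<in> D\<close> U_C2]) blast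
  then have "f x0 (u x0) \<le> (sym_part (hess U x0) *v grad U x0) \<bullet> grad U x0"
    using sol \<open>x0 \<in> D\<close> D(3) unfolding nonneg_solution_def by blast
  then have "f x0 (u x0) \<le> inf_laplacian U x0"
    by (simp add: sym_part_quadratic_form inf_laplacian_eq_quadratic_form)
  also have "\<dots> \<le> F x0 (U x0)"
    using U_super \<open>x0 \<in> D\<close> by blast
  also have "\<dots> \<le> F x0 (u x0)"
    using F_mono U_nonneg pos \<open>x0 \<in> D\<close> by auto
  also have "\<dots> < f x0 (u x0)"
    using F_less U_nonneg pos \<open>x0 \<in> D\<close> by force
  finally show False
    by simp
qed

theorem lemma8:
  fixes \<Omega> :: "(real^'n) set"
    and f F :: "real^'n \<Rightarrow> real \<Rightarrow> real"
    and u U :: "real^'n \<Rightarrow> real"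
    and R :: real
  assumes n2: "CARD('n) \<ge> 2"
    and dom: "open \<Omega>" "connected \<Omega>" "\<Omega> \<noteq> {}"
    and unb: "\<not> bounded \<Omega>"
    and sol: "nonneg_solution \<Omega> f u"
    and R: "R > 0"
    and F_mono: "\<forall>x\<in>ball 0 R \<inter> \<Omega>. \<forall>s t. 0 \<le> s \<longrightarrow> s \<le> t \<longrightarrow> F x s \<le> F x t"
    and F_less: "\<forall>x\<in>ball 0 R \<inter> \<Omega>. \<forall>t>0. F x t < f x t"
    and U_C2: "C2_on U (ball 0 R \<inter> \<Omega>)"
    and U_cont: "continuous_on (closure (ball 0 R \<inter> \<Omega>)) U"
    and U_nonneg: "\<forall>x\<in>ball 0 R \<inter> \<Omega>. U x \<ge> 0"
    and U_super: "\<forall>x\<in>ball 0 R \<inter> \<Omega>. inf_laplacian U x \<le> F x (U x)"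
    and U_bdry: "\<forall>x\<in>frontier (ball 0 R \<inter> \<Omega>). U x \<ge> u x"
  shows "\<forall>x\<in>closure (ball 0 R \<inter> \<Omega>). U x \<ge> u x"
proof -
  have D: "open (ball 0 R \<inter> \<Omega>)" "bounded (ball 0 R \<inter> \<Omega>)" "ball 0 R \<inter> \<Omega> \<subseteq> \<Omega>"
    using dom(1) by auto
  show ?thesis
    by (rule comparison_with_classical_supersolution[OF D sol F_mono F_less U_C2 U_cont U_nonneg U_super U_bdry])
qed

end
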